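(* Let $\mu,\sigma,r,c_s>0$ and $\theta\in\mathbb{R}$ be constants. Define \[F(x)=\int_0^\infty u^{\frac{r}{\mu}-1}e^{\sqrt{\frac{2\mu}{\sigma^2}}(x-\theta)u-\frac{u^2}{2}}\,du,\qquad G(x)=\int_0^\infty u^{\frac{r}{\mu}-1}e^{\sqrt{\frac{2\mu}{\sigma^2}}(\theta-x)u-\frac{u^2}{2}}\,du,\] $\psi(x)=F(x)/G(x)$ (a strictly increasing bijection from $\mathbb{R}$ onto $(0,\infty)$), $h_s(x)=e^x-c_s$, and \[H(z)=\begin{cases}\dfrac{h_s}{G}\circ\psi^{-1}(z), & z>0,\\[1mm] \lim_{x\to-\infty}\dfrac{(h_s(x))^+}{G(x)}, & z=0.\end{cases}\] Let $x_s$ be the unique root of $f_s(x)=(\mu\theta+\frac12\sigma^2-r)-\mu x+rc_se^{-x}$. Then $H$ is continuous on $[0,+\infty)$, twice differentiable on $(0,+\infty)$, and: (i) $H(0)=0$, $H(z)<0$ for $z\in(0,\psi(\ln c_s))$ and $H(z)>0$ for $z\in(\psi(\ln c_s),+\infty)$; (ii) $H$ is strictly increasing on $(\psi(\ln c_s),+\infty)$, and $H'(z)\to0$ as $z\to+\infty$; (iii) $H$ is convex on $(0,\psi(x_s)]$ and concave on $[\psi(x_s),+\infty)$.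
   Context: $F$ and $G$ are the positive increasing and decreasing solutions of $\frac{\sigma^2}{2}u''+\mu(\theta-x)u'=ru$ (the generator of the OU process $dX_t=\mu(\theta-X_t)dt+\sigma dB_t$). *)

theory Defs
  imports "HOL-Analysis.Analysis"
begin

definition OU_F :: "real \<Rightarrow> real \<Rightarrow> real \<Rightarrow> real \<Rightarrow> real \<Rightarrow> real" where
  "OU_F mu sig theta r x =
     (LBINT u:{0<..}. u powr (r / mu - 1) *
        exp (sqrt (2 * mu / sig^2) * (x - theta) * u - u^2 / 2))"

definition OU_G :: "real \<Rightarrow> real \<Rightarrow> real \<Rightarrow> real \<Rightarrow> real \<Rightarrow> real" where
  "OU_G mu sig theta r x =
     (LBINT u:{0<..}. u powr (r / mu - 1) *
        exp (sqrt (2 * mu / sig^2) * (theta - x) * u - u^2 / 2))"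

definition OU_psi :: "real \<Rightarrow> real \<Rightarrow> real \<Rightarrow> real \<Rightarrow> real \<Rightarrow> real" where
  "OU_psi mu sig theta r x = OU_F mu sig theta r x / OU_G mu sig theta r x"

definition h_s :: "real \<Rightarrow> real \<Rightarrow> real" where
  "h_s c x = exp x - c"

definition OU_H :: "real \<Rightarrow> real \<Rightarrow> real \<Rightarrow> real \<Rightarrow> real \<Rightarrow> real \<Rightarrow> real" where
  "OU_H mu sig theta r c z =
     (if z > 0 then
        (let x = inv (OU_psi mu sig theta r) z in h_s c x / OU_G mu sig theta r x)
      else Lim at_bot (\<lambda>x. max 0 (h_s c x) / OU_G mu sig theta r x))"

definition f_s :: "real \<Rightarrow> real \<Rightarrow> real \<Rightarrow> real \<Rightarrow> real \<Rightarrow> real \<Rightarrow> real" where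
  "f_s mu sig theta r c x = (mu * theta + sig^2 / 2 - r) - mu * x + r * c * exp (- x)"

definition x_s :: "real \<Rightarrow> real \<Rightarrow> real \<Rightarrow> real \<Rightarrow> real \<Rightarrow> real" where
  "x_s mu sig theta r c = (THE x. f_s mu sig theta r c x = 0)"

end

theory Submission
  imports Defs "HOL-Real_Asymp.Real_Asymp"
begin

text \<open>
  With k = sqrt (2 mu / sig^2) and a = r / mu - 1, F and G are the Gaussian moments
  M_a(y) = int_0^oo u^a exp (y u - u^2/2) du evaluated at k (x - theta) and k (theta - x).
  Differentiating under the integral raises the order of the moment, and integration by
  parts gives the recurrence M_(a+2) = y M_(a+1) + (a+1) M_a, which is exactly the ODE
  u'' = beta (x - theta) u' + rho u (the OU equation scaled by 2 / sig^2).
  With x = psi^-1 z and W = F' G - F G' the Wronskian, the chain rule gives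
  H'(z) = (h' G - h G') / W; differentiating once more, the ODE for F and G collapses the
  numerator to G L h with L h = h'' - beta (x - theta) h' - rho h = (2 / sig^2) e^x f_s(x).
  So H'' has the sign of f_s, which is strictly decreasing with root x_s.
  Where h >= 0 both terms of H' are positive and bounded by e^x / F' + e^x / F, which tends
  to 0 because the moments grow like exp (y^2 / 2).
\<close>

section \<open>Gaussian moments\<close>

definition gauss_moment :: "real \<Rightarrow> real \<Rightarrow> real" where
  "gauss_moment a y = (LBINT u:{0<..}. u powr a * exp (y * u - u\<^sup>2 / 2))"

lemma set_integrable_powr_div_exp:
  assumes "a > -1"
  shows "set_integrable lborel {0<..} (\<lambda>u::real. u powr a / exp u)"
proof -
  have "((\<lambda>t. t powr a / exp t) has_integral Gamma (a + 1)) {0..}"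
    using Gamma_integral_real[of "a + 1"] assms by simp
  then have "(\<lambda>t. t powr a / exp t) absolutely_integrable_on {0..}"
    by (intro nonnegative_absolutely_integrable_1) (auto simp: has_integral_integrable)
  then have "set_integrable lebesgue {0..} (\<lambda>t::real. t powr a / exp t)"
    by (simp add: absolutely_integrable_on_def)
  then have "set_integrable lebesgue {0<..} (\<lambda>t::real. t powr a / exp t)"
    by (rule set_integrable_subset) auto
  then show ?thesis
    unfolding set_integrable_def
    by (subst (asm) integrable_completion)
       (auto intro!: borel_measurable_continuous_on_indicator continuous_intros)
qed

lemma gauss_moment_integrable:
  assumes "a > -1"
  shows "set_integrable lborel {0<..} (\<lambda>u::real. u powr a * exp (y * u - u\<^sup>2 / 2))"
proof (rule set_integrable_bound[OF set_integrable_mult_right[OF set_integrable_powr_div_exp[OF assms]]])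
  show "set_borel_measurable lborel {0<..} (\<lambda>u::real. u powr a * exp (y * u - u\<^sup>2 / 2))"
    unfolding set_borel_measurable_def
    by (auto intro!: borel_measurable_continuous_on_indicator continuous_intros)
  have "norm (u powr a * exp (y * u - u\<^sup>2 / 2)) \<le> norm (exp ((y + 1)\<^sup>2 / 2) * (u powr a / exp u))"
    if "u > 0" for u :: real
  proof -
    have "y * u - u\<^sup>2 / 2 \<le> (y + 1)\<^sup>2 / 2 - u"
      using sum_squares_ge_zero[of "u - (y + 1)" 0] by (simp add: power2_eq_square algebra_simps)
    then have "exp (y * u - u\<^sup>2 / 2) \<le> exp ((y + 1)\<^sup>2 / 2 - u)"
      by simp
    also have "\<dots> = exp ((y + 1)\<^sup>2 / 2) / exp u"
      by (rule exp_diff)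
    finally have "u powr a * exp (y * u - u\<^sup>2 / 2) \<le> u powr a * (exp ((y + 1)\<^sup>2 / 2) / exp u)"
      by (rule mult_left_mono) simp
    then show ?thesis
      by (simp add: mult.commute)
  qed
  then show "AE u in lborel. u \<in> {0<..} \<longrightarrow>
      norm (u powr a * exp (y * u - u\<^sup>2 / 2)) \<le> norm (exp ((y + 1)\<^sup>2 / 2) * (u powr a / exp u))"
    by auto
qed

lemma abs_exp_minus_one_minus_le: "\<bar>exp t - 1 - t\<bar> \<le> t\<^sup>2 * exp \<bar>t\<bar>"
  for t :: real
proof -
  obtain s where s: "\<bar>s\<bar> \<le> \<bar>t\<bar>" and taylor: "exp t = 1 + t + exp s / 2 * t\<^sup>2"
    using Maclaurin_exp_le[of t 2] by (auto simp: numeral_2_eq_2)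
  have "exp s \<le> exp \<bar>t\<bar>"
    using s by simp
  then have "exp s / 2 \<le> exp \<bar>t\<bar>"
    using exp_gt_zero[of s] by linarith
  then have "exp s / 2 * t\<^sup>2 \<le> exp \<bar>t\<bar> * t\<^sup>2"
    by (rule mult_right_mono) simp
  then show ?thesis
    using taylor by (simp add: mult.commute)
qed

lemma gauss_integrand_diff_quotient_bound:
  fixes u h y a :: real
  assumes u: "u > 0" and h: "h \<noteq> 0" "\<bar>h\<bar> < 1"
  shows "\<bar>(u powr a * exp ((y + h) * u - u\<^sup>2 / 2) - u powr a * exp (y * u - u\<^sup>2 / 2)) / h
            - u powr (a + 1) * exp (y * u - u\<^sup>2 / 2)\<bar>
         \<le> \<bar>h\<bar> * (u powr (a + 2) * exp ((y + 1) * u - u\<^sup>2 / 2))"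
proof -
  define E where "E = exp (y * u - u\<^sup>2 / 2)"
  define t where "t = h * u"
  have E: "E > 0"
    by (simp add: E_def)
  have "(u powr a * exp ((y + h) * u - u\<^sup>2 / 2) - u powr a * exp (y * u - u\<^sup>2 / 2)) / h
        - u powr (a + 1) * exp (y * u - u\<^sup>2 / 2) = u powr a * E * (exp t - 1 - t) / h"
    using u h by (simp add: E_def t_def powr_add exp_add[symmetric] field_simps)
  also have "\<bar>\<dots>\<bar> = u powr a * E * \<bar>exp t - 1 - t\<bar> / \<bar>h\<bar>"
    using E u by (simp add: abs_mult)
  also have "\<dots> \<le> u powr a * E * (t\<^sup>2 * exp u) / \<bar>h\<bar>"
  proof -
    have "exp \<bar>t\<bar> \<le> exp u"
      using u h by (simp add: t_def abs_mult mult_left_le_one_le)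
    then have "\<bar>exp t - 1 - t\<bar> \<le> t\<^sup>2 * exp u"
      using abs_exp_minus_one_minus_le[of t] mult_left_mono[of "exp \<bar>t\<bar>" "exp u" "t\<^sup>2"] by simp
    then show ?thesis
      using E u by (intro divide_right_mono mult_left_mono) auto
  qed
  also have "\<dots> = \<bar>h\<bar> * (u powr (a + 2) * exp ((y + 1) * u - u\<^sup>2 / 2))"
    using u h by (simp add: E_def t_def powr_add exp_add[symmetric] power2_eq_square abs_mult field_simps)
  finally show ?thesis .
qed

lemma gauss_moment_has_real_derivative:
  assumes a: "a > -1"
  shows "(gauss_moment a has_real_derivative gauss_moment (a + 1) y) (at y)"
proof -
  let ?P = "\<lambda>a y u::real. u powr a * exp (y * u - u\<^sup>2 / 2)"
  have int: "set_integrable lborel {0<..} (?P b z)" if "b > -1" for b z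
    using gauss_moment_integrable[OF that] .
  have "norm ((gauss_moment a (y + h) - gauss_moment a y) / h - gauss_moment (a + 1) y)
          \<le> \<bar>h\<bar> * gauss_moment (a + 2) (y + 1)"
    if h: "h \<noteq> 0" "\<bar>h\<bar> < 1" for h
  proof -
    define D where "D = (\<lambda>u. (?P a (y + h) u - ?P a y u) / h - ?P (a + 1) y u)"
    have iD: "set_integrable lborel {0<..} D"
      unfolding D_def using a by (intro set_integral_diff(1) set_integrable_divide int) auto
    have "(gauss_moment a (y + h) - gauss_moment a y) / h - gauss_moment (a + 1) y
          = (LBINT u:{0<..}. D u)"
      unfolding D_def gauss_moment_def using a
      by (simp add: set_integral_diff(2) set_integrable_divide int)
    also have "norm \<dots> \<le> (LBINT u:{0<..}. norm (D u))"
      by (rule set_integral_norm_bound[OF iD])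
    also have "\<dots> \<le> (LBINT u:{0<..}. \<bar>h\<bar> * ?P (a + 2) (y + 1) u)"
      using a
      by (intro set_integral_mono set_integrable_norm iD set_integrable_mult_right int)
         (auto simp: D_def intro!: gauss_integrand_diff_quotient_bound h)
    finally show ?thesis
      by (simp add: gauss_moment_def)
  qed
  then have "\<forall>\<^sub>F h in at 0. norm ((gauss_moment a (y + h) - gauss_moment a y) / h - gauss_moment (a + 1) y)
               \<le> \<bar>h\<bar> * gauss_moment (a + 2) (y + 1)"
    unfolding eventually_at by (intro exI[of _ 1]) auto
  then have "((\<lambda>h. (gauss_moment a (y + h) - gauss_moment a y) / h - gauss_moment (a + 1) y) \<longlongrightarrow> 0) (at 0)"
    by (rule Lim_null_comparison) (auto intro!: tendsto_eq_intros)
  then show ?thesis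
    unfolding DERIV_def by (simp add: LIM_zero_iff)
qed

lemma gauss_moment_recurrence:
  assumes a: "a > -1"
  shows "gauss_moment (a + 2) y = y * gauss_moment (a + 1) y + (a + 1) * gauss_moment a y"
proof -
  let ?P = "\<lambda>a u::real. u powr a * exp (y * u - u\<^sup>2 / 2)"
  define f where "f = (\<lambda>u. (a + 1) * ?P a u + y * ?P (a + 1) u - ?P (a + 2) u)"
  have int: "set_integrable lborel {0<..} (?P b)" if "b > -1" for b
    using gauss_moment_integrable[OF that] .
  have f_int: "set_integrable lborel (einterval 0 \<infinity>) f"
    unfolding f_def zero_ereal_def einterval_eq using a
    by (intro set_integral_diff(1) set_integral_add(1) set_integrable_mult_right int) auto
  have "(LBINT u=0..\<infinity>. f u) = 0 - 0"
  proof (rule interval_integral_FTC_integrable[OF _ _ _ f_int, where F = "?P (a + 1)"])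
    fix x :: real
    assume "0 < ereal x" "ereal x < \<infinity>"
    then have x: "x > 0"
      by simp
    have "x powr (a + 2) = x powr (a + 1) * x"
      using x powr_add[of x "a + 1" 1] by (simp add: add.assoc)
    then have "(?P (a + 1) has_real_derivative f x) (at x)"
      using x by (auto intro!: derivative_eq_intros simp: f_def power2_eq_square algebra_simps)
    then show "(?P (a + 1) has_vector_derivative f x) (at x)"
      by (simp add: has_real_derivative_iff_has_vector_derivative)
    show "isCont f x"
      unfolding f_def using x by (auto intro!: continuous_intros)
  next
    have "(?P (a + 1) \<longlongrightarrow> 0 * exp (y * 0 - 0\<^sup>2 / 2)) (at_right 0)"
      using a by (intro tendsto_mult tendsto_zero_powrI tendsto_intros)
                 (auto simp: eventually_at_filter)
    then show "((?P (a + 1) \<circ> real_of_ereal) \<longlongrightarrow> 0) (at_right 0)"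
      unfolding zero_ereal_def ereal_tendsto_simps by simp
    show "((?P (a + 1) \<circ> real_of_ereal) \<longlongrightarrow> 0) (at_left \<infinity>)"
      unfolding ereal_tendsto_simps by real_asymp
  qed simp
  then have "(LBINT u:{0<..}. f u) = 0"
    by (simp add: interval_lebesgue_integral_0_infty)
  moreover have "(LBINT u:{0<..}. f u)
      = (a + 1) * gauss_moment a y + y * gauss_moment (a + 1) y - gauss_moment (a + 2) y"
    unfolding f_def gauss_moment_def using a
    by (simp add: set_integral_diff(2) set_integral_add(2) set_integrable_mult_right int)
  ultimately show ?thesis
    by simp
qed

lemma gauss_moment_ge_on_window:
  assumes a: "a > -1" and s: "s > 0"
    and m: "\<And>u. u \<in> {s..s + 1} \<Longrightarrow> m \<le> u powr a * exp (y * u - u\<^sup>2 / 2)"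
  shows "m \<le> gauss_moment a y"
proof -
  let ?P = "\<lambda>u::real. u powr a * exp (y * u - u\<^sup>2 / 2)"
  have int: "set_integrable lborel {0<..} ?P"
    using gauss_moment_integrable[OF a] .
  have int1: "set_integrable lborel {s..s + 1} ?P"
    by (rule set_integrable_subset[OF int]) (use s in auto)
  have int2: "set_integrable lborel ({0<..} - {s..s + 1}) ?P"
    by (rule set_integrable_subset[OF int]) auto
  have "{s..s + 1} \<union> ({0<..} - {s..s + 1}) = {0<..}"
    using s by auto
  then have "gauss_moment a y = (LBINT u:{s..s + 1}. ?P u) + (LBINT u:({0<..} - {s..s + 1}). ?P u)"
    using set_integral_Un[OF _ int1 int2] by (simp add: gauss_moment_def)
  moreover have "0 \<le> (LBINT u:({0<..} - {s..s + 1}). ?P u)"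
    using set_integral_mono[OF _ int2, of "\<lambda>_. 0"] by (simp add: set_integrable_def)
  moreover have "(LBINT u:{s..s + 1}. m) \<le> (LBINT u:{s..s + 1}. ?P u)"
    by (rule set_integral_mono[OF _ int1]) (auto intro: m simp: set_integrable_def)
  moreover have "(LBINT u:{s..s + 1}. m) = m"
    by (subst set_integral_const) auto
  ultimately show ?thesis
    by linarith
qed

lemma powr_ge_inverse:
  fixes a u :: real
  assumes "a > -1" "u \<ge> 1"
  shows "1 / u \<le> u powr a"
  using powr_mono[of "-1" a u] assms by (simp add: powr_minus divide_inverse)

lemma gauss_moment_pos:
  assumes a: "a > -1"
  shows "gauss_moment a y > 0"
proof -
  have "exp (- 2 * \<bar>y\<bar> - 2) / 2 \<le> gauss_moment a y"
  proof (rule gauss_moment_ge_on_window[OF a, of 1])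
    fix u :: real
    assume u: "u \<in> {1..1 + 1}"
    have "1 / 2 \<le> 1 / u"
      using u by (simp add: field_simps)
    moreover have "1 / u \<le> u powr a"
      using u by (intro powr_ge_inverse[OF a]) auto
    ultimately have "1 / 2 \<le> u powr a"
      by linarith
    moreover have "exp (- 2 * \<bar>y\<bar> - 2) \<le> exp (y * u - u\<^sup>2 / 2)"
    proof -
      have "\<bar>y * u\<bar> \<le> \<bar>y\<bar> * 2"
        using u by (auto simp: abs_mult intro!: mult_left_mono)
      moreover have "u\<^sup>2 \<le> 4"
        using u by (auto simp: power2_eq_square intro: mult_mono[of u 2 u 2, simplified])
      ultimately show ?thesis
        by (auto simp: abs_le_iff)
    qed
    ultimately have "1 / 2 * exp (- 2 * \<bar>y\<bar> - 2) \<le> u powr a * exp (y * u - u\<^sup>2 / 2)"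
      by (intro mult_mono) auto
    then show "exp (- 2 * \<bar>y\<bar> - 2) / 2 \<le> u powr a * exp (y * u - u\<^sup>2 / 2)"
      by simp
  qed simp
  then show ?thesis
    by (rule less_le_trans[rotated]) simp
qed

lemma gauss_moment_ge_exp_square:
  assumes a: "a > -1" and y: "y \<ge> 1"
  shows "exp ((y\<^sup>2 - 1) / 2) / (y + 1) \<le> gauss_moment a y"
proof (rule gauss_moment_ge_on_window[OF a, of y])
  fix u :: real
  assume u: "u \<in> {y..y + 1}"
  have "1 / (y + 1) \<le> 1 / u"
    using u y by (simp add: field_simps)
  moreover have "1 / u \<le> u powr a"
    using u y by (intro powr_ge_inverse[OF a]) auto
  ultimately have "1 / (y + 1) \<le> u powr a"
    by linarith
  moreover have "exp ((y\<^sup>2 - 1) / 2) \<le> exp (y * u - u\<^sup>2 / 2)"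
  proof -
    have "(u - y)\<^sup>2 \<le> 1"
      using u by (auto simp: power2_eq_square intro: mult_le_one)
    then have "(y\<^sup>2 - 1) / 2 \<le> y * u - u\<^sup>2 / 2"
      by (simp add: power2_diff field_simps)
    then show ?thesis
      by simp
  qed
  ultimately have "1 / (y + 1) * exp ((y\<^sup>2 - 1) / 2) \<le> u powr a * exp (y * u - u\<^sup>2 / 2)"
    using y by (intro mult_mono) auto
  then show "exp ((y\<^sup>2 - 1) / 2) / (y + 1) \<le> u powr a * exp (y * u - u\<^sup>2 / 2)"
    by simp
qed (use y in simp)

lemma gauss_moment_dominates_exp:
  assumes a: "a > -1" and b: "b > 0"
  shows "((\<lambda>y. exp (b * y) / gauss_moment a y) \<longlongrightarrow> 0) at_top"
proof (rule tendsto_sandwich)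
  show "\<forall>\<^sub>F y in at_top. 0 \<le> exp (b * y) / gauss_moment a y"
    using gauss_moment_pos[OF a] by (simp add: less_imp_le)
  show "\<forall>\<^sub>F y in at_top. exp (b * y) / gauss_moment a y \<le> exp (b * y) / (exp ((y\<^sup>2 - 1) / 2) / (y + 1))"
    using eventually_ge_at_top[of 1]
  proof eventually_elim
    case (elim y)
    then show ?case
      using gauss_moment_pos[OF a, of y]
      by (intro divide_left_mono gauss_moment_ge_exp_square a) auto
  qed
  show "((\<lambda>y. exp (b * y) / (exp ((y\<^sup>2 - 1) / 2) / (y + 1))) \<longlongrightarrow> 0) at_top"
    using b by real_asymp
qed simp

lemma gauss_moment_at_top:
  assumes a: "a > -1"
  shows "filterlim (gauss_moment a) at_top at_top"
proof (rule filterlim_at_top_mono)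
  show "filterlim (\<lambda>y::real. exp ((y\<^sup>2 - 1) / 2) / (y + 1)) at_top at_top"
    by real_asymp
  show "\<forall>\<^sub>F y in at_top. exp ((y\<^sup>2 - 1) / 2) / (y + 1) \<le> gauss_moment a y"
    using eventually_ge_at_top[of 1] by eventually_elim (rule gauss_moment_ge_exp_square[OF a])
qed

section \<open>The transformed payoff of a pair of monotone ODE solutions\<close>

lemma h_s_neg_iff: "c > 0 \<Longrightarrow> h_s c x < 0 \<longleftrightarrow> x < ln c"
  using exp_less_cancel_iff[of x "ln c"] by (simp add: h_s_def)

lemma h_s_pos_iff: "c > 0 \<Longrightarrow> 0 < h_s c x \<longleftrightarrow> ln c < x"
  using exp_less_cancel_iff[of "ln c" x] by (simp add: h_s_def)

locale ou_solution_pair =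
  fixes F F1 F2 G G1 G2 :: "real \<Rightarrow> real" and \<beta> \<theta> \<rho> c :: real
  assumes F_deriv: "\<And>x. (F has_real_derivative F1 x) (at x)"
    and F1_deriv: "\<And>x. (F1 has_real_derivative F2 x) (at x)"
    and G_deriv: "\<And>x. (G has_real_derivative G1 x) (at x)"
    and G1_deriv: "\<And>x. (G1 has_real_derivative G2 x) (at x)"
    and F_pos: "\<And>x. F x > 0" and G_pos: "\<And>x. G x > 0"
    and F1_pos: "\<And>x. F1 x > 0" and G1_neg: "\<And>x. G1 x < 0"
    and F_ode: "\<And>x. F2 x = \<beta> * (x - \<theta>) * F1 x + \<rho> * F x"
    and G_ode: "\<And>x. G2 x = \<beta> * (x - \<theta>) * G1 x + \<rho> * G x"
    and strike_pos: "c > 0"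
    and exp_div_F: "((\<lambda>x. exp x / F x) \<longlongrightarrow> 0) at_top"
    and exp_div_F1: "((\<lambda>x. exp x / F1 x) \<longlongrightarrow> 0) at_top"
    and G_at_bot: "filterlim G at_top at_bot"
begin

definition psi :: "real \<Rightarrow> real" where
  "psi x = F x / G x"

definition phi :: "real \<Rightarrow> real" where
  "phi = inv psi"

definition wronskian :: "real \<Rightarrow> real" where
  "wronskian x = F1 x * G x - F x * G1 x"

definition H :: "real \<Rightarrow> real" where
  "H z = (if z > 0 then (let x = phi z in h_s c x / G x)
          else Lim at_bot (\<lambda>x. max 0 (h_s c x) / G x))"

text \<open>\<open>dH x\<close> is \<open>H'(\<psi> x)\<close>.\<close>
definition dH :: "real \<Rightarrow> real" where
  "dH x = (exp x * G x - h_s c x * G1 x) / wronskian x"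

text \<open>\<open>Lh = L (h_s c)\<close> for \<open>L u = u'' - \<beta> (x - \<theta>) u' - \<rho> u\<close>, using \<open>h_s' = h_s'' = exp\<close>.\<close>
definition Lh :: "real \<Rightarrow> real" where
  "Lh x = exp x - \<beta> * (x - \<theta>) * exp x - \<rho> * h_s c x"

definition d2H :: "real \<Rightarrow> real" where
  "d2H z = G (phi z) * Lh (phi z) / wronskian (phi z) * ((G (phi z))\<^sup>2 / wronskian (phi z))"

lemma wronskian_pos: "wronskian x > 0"
  using mult_pos_pos[OF F1_pos G_pos, of x x] mult_pos_neg[OF F_pos G1_neg, of x x]
  unfolding wronskian_def by linarith

lemma psi_pos: "psi x > 0"
  using F_pos G_pos by (simp add: psi_def)

lemma psi_has_real_derivative: "(psi has_real_derivative wronskian x / (G x)\<^sup>2) (at x)"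
  unfolding psi_def wronskian_def using G_pos[of x]
  by (auto intro!: derivative_eq_intros F_deriv G_deriv simp: power2_eq_square field_simps)

lemma strict_mono_psi: "strict_mono psi"
proof (rule strict_monoI)
  fix x y :: real
  assume "x < y"
  then show "psi x < psi y"
  proof (rule DERIV_pos_imp_increasing)
    fix t
    show "\<exists>d. (psi has_real_derivative d) (at t) \<and> d > 0"
      using psi_has_real_derivative[of t] wronskian_pos[of t] G_pos[of t] by auto
  qed
qed

lemma psi_less_iff: "psi x < psi y \<longleftrightarrow> x < y"
  using strict_mono_psi by (simp add: strict_mono_less)

lemma psi_le_iff: "psi x \<le> psi y \<longleftrightarrow> x \<le> y"
  using strict_mono_psi by (simp add: strict_mono_less_eq)

lemma isCont_psi: "isCont psi x"
  using psi_has_real_derivative DERIV_isCont by blast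

lemma F_mono: "x \<le> y \<Longrightarrow> F x \<le> F y"
  by (rule DERIV_nonneg_imp_nondecreasing[of x y F]) (use F_deriv F1_pos in \<open>auto intro: less_imp_le\<close>)

lemma G_antimono: "x \<le> y \<Longrightarrow> G y \<le> G x"
  by (rule DERIV_nonpos_imp_nonincreasing[of x y G]) (use G_deriv G1_neg in \<open>auto intro: less_imp_le\<close>)

lemma F_at_top: "filterlim F at_top at_top"
proof (rule filterlim_at_top_mono[OF exp_at_top])
  have "\<forall>\<^sub>F x in at_top. exp x / F x < 1"
    using exp_div_F by (rule order_tendstoD) simp
  then show "\<forall>\<^sub>F x in at_top. exp x \<le> F x"
    by eventually_elim (use F_pos in \<open>auto simp: field_simps\<close>)
qed

lemma psi_at_top: "filterlim psi at_top at_top"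
proof (rule filterlim_at_top_mono)
  show "filterlim (\<lambda>x. F x / G 0) at_top at_top"
    unfolding divide_inverse using G_pos[of 0]
    by (intro filterlim_at_top_mult_tendsto_pos[OF tendsto_const _ F_at_top]) simp
  show "\<forall>\<^sub>F x in at_top. F x / G 0 \<le> psi x"
    using eventually_ge_at_top[of 0]
  proof eventually_elim
    case (elim x)
    then show ?case
      using G_antimono[OF elim] F_pos[of x] G_pos[of x] unfolding psi_def by (intro divide_left_mono) auto
  qed
qed

lemma psi_at_bot: "(psi \<longlongrightarrow> 0) at_bot"
proof (rule tendsto_sandwich)
  show "\<forall>\<^sub>F x in at_bot. 0 \<le> psi x"
    using psi_pos by (simp add: less_imp_le)
  show "\<forall>\<^sub>F x in at_bot. psi x \<le> F 0 * inverse (G x)"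
    using eventually_le_at_bot[of 0]
  proof eventually_elim
    case (elim x)
    then show ?case
      using F_mono[OF elim] G_pos[of x] by (simp add: psi_def divide_inverse divide_right_mono)
  qed
  show "((\<lambda>x. F 0 * inverse (G x)) \<longlongrightarrow> 0) at_bot"
    using tendsto_mult_right_zero[OF tendsto_inverse_0_at_top[OF G_at_bot]] .
qed simp

lemma psi_surj_pos: "z > 0 \<Longrightarrow> \<exists>x. psi x = z"
proof -
  assume "z > 0"
  obtain x1 where x1: "psi x1 < z"
    using order_tendstoD(2)[OF psi_at_bot \<open>z > 0\<close>] by (auto simp: eventually_at_bot_linorder)
  obtain x2 where x2: "psi x2 > z"
    using psi_at_top unfolding filterlim_at_top_dense by (auto simp: eventually_at_top_linorder)
  have "x1 < x2"
    using x1 x2 psi_less_iff[of x1 x2] by simp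
  then show ?thesis
    using IVT[of psi x1 z x2] x1 x2 isCont_psi by auto
qed

lemma psi_phi: "z > 0 \<Longrightarrow> psi (phi z) = z"
  unfolding phi_def using psi_surj_pos by (metis f_inv_into_f rangeI)

lemma phi_psi: "phi (psi x) = x"
  unfolding phi_def using strict_mono_psi by (simp add: strict_mono_imp_inj_on)

lemma phi_less_iff: "z > 0 \<Longrightarrow> phi z < x \<longleftrightarrow> z < psi x"
  by (metis psi_less_iff psi_phi)

lemma less_phi_iff: "z > 0 \<Longrightarrow> x < phi z \<longleftrightarrow> psi x < z"
  by (metis psi_less_iff psi_phi)

lemma phi_at_top: "filterlim phi at_top at_top"
  unfolding filterlim_at_top
proof
  show "\<forall>\<^sub>F z in at_top. x \<le> phi z" for x
    using eventually_gt_at_top[of "psi x"]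
  proof eventually_elim
    case (elim z)
    then have "z > 0"
      using psi_pos[of x] by linarith
    then show ?case
      using elim less_phi_iff[of z x] by simp
  qed
qed

lemma phi_at_right_0: "filterlim phi at_bot (at 0 within {0..})"
  unfolding filterlim_at_bot
proof
  show "\<forall>\<^sub>F z in at 0 within {0..}. phi z \<le> x" for x
  proof -
    have "\<forall>\<^sub>F z in at 0 within {0..}. z \<in> {0<..<psi x}"
      using psi_pos[of x] eventually_nhds_in_open[of "{..<psi x}" 0]
      by (auto simp: eventually_at_filter elim: eventually_mono)
    then show ?thesis
      by eventually_elim (auto simp: phi_less_iff less_imp_le)
  qed
qed

lemma phi_has_real_derivative:
  assumes "z > 0"
  shows "(phi has_real_derivative (G (phi z))\<^sup>2 / wronskian (phi z)) (at z)"
proof -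
  have "isCont phi (psi (phi z))"
    by (rule isCont_inverse_function[where d = 1]) (auto simp: phi_psi isCont_psi)
  then have "(phi has_real_derivative inverse (wronskian (phi z) / (G (phi z))\<^sup>2)) (at z)"
    using assms psi_phi[of z]
    by (intro DERIV_inverse_function[where f = psi and a = 0 and b = "z + 1"])
       (simp_all add: psi_has_real_derivative wronskian_pos G_pos psi_phi less_imp_neq[symmetric])
  then show ?thesis
    by simp
qed

lemma H_pos_arg: "z > 0 \<Longrightarrow> H z = h_s c (phi z) / G (phi z)"
  by (simp add: H_def Let_def)

lemma H_has_real_derivative:
  assumes z: "z > 0"
  shows "(H has_real_derivative dH (phi z)) (at z)"
proof -
  let ?x = "phi z"
  have "((\<lambda>x. h_s c x / G x) has_real_derivative (exp ?x * G ?x - h_s c ?x * G1 ?x) / (G ?x)\<^sup>2) (at ?x)"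
    unfolding h_s_def using G_pos[of ?x]
    by (auto intro!: derivative_eq_intros G_deriv simp: power2_eq_square field_simps)
  from DERIV_chain2[OF this phi_has_real_derivative[OF z]]
  have "((\<lambda>z. h_s c (phi z) / G (phi z)) has_real_derivative dH ?x) (at z)"
    using G_pos[of ?x] by (simp add: dH_def)
  then show ?thesis
    by (rule has_field_derivative_transform_within_open[where S = "{0<..}"])
       (use z in \<open>auto simp: H_pos_arg\<close>)
qed

lemma deriv_H: "z > 0 \<Longrightarrow> deriv H z = dH (phi z)"
  using H_has_real_derivative DERIV_imp_deriv by blast

text \<open>By the ODE, \<open>W' = \<beta> (x - \<theta>) W\<close>, and this term cancels against the \<open>\<beta>\<close>-terms of the numerator.\<close>
lemma dH_has_real_derivative: "(dH has_real_derivative G x * Lh x / wronskian x) (at x)"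
proof -
  have W: "(wronskian has_real_derivative F2 x * G x - F x * G2 x) (at x)"
    unfolding wronskian_def
    by (auto intro!: derivative_eq_intros F_deriv G_deriv F1_deriv G1_deriv simp: algebra_simps)
  have N: "((\<lambda>x. exp x * G x - h_s c x * G1 x) has_real_derivative exp x * G x - h_s c x * G2 x) (at x)"
    unfolding h_s_def
    by (auto intro!: derivative_eq_intros G_deriv G1_deriv simp: algebra_simps)
  have "(exp x * G x - h_s c x * G2 x) * wronskian x
        - (exp x * G x - h_s c x * G1 x) * (F2 x * G x - F x * G2 x)
        = G x * Lh x * wronskian x"
    unfolding F_ode G_ode Lh_def wronskian_def by (simp add: algebra_simps)
  then show ?thesis
    using DERIV_divide[OF N W] wronskian_pos[of x] by (simp add: dH_def[abs_def] power2_eq_square)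
qed

lemma dH_phi_has_real_derivative:
  "z > 0 \<Longrightarrow> ((\<lambda>z. dH (phi z)) has_real_derivative d2H z) (at z)"
  unfolding d2H_def by (rule DERIV_chain2[OF dH_has_real_derivative phi_has_real_derivative])

lemma deriv_H_has_real_derivative: "z > 0 \<Longrightarrow> (deriv H has_real_derivative d2H z) (at z)"
  by (rule has_field_derivative_transform_within_open[OF dH_phi_has_real_derivative, where S = "{0<..}"])
     (auto simp: deriv_H)

lemma H_twice_differentiable: "z > 0 \<Longrightarrow> H differentiable (at z) \<and> deriv H differentiable (at z)"
  unfolding real_differentiable_def using H_has_real_derivative deriv_H_has_real_derivative by blast

lemma H_zero: "H 0 = 0"
proof -
  have "\<forall>\<^sub>F x in at_bot. max 0 (h_s c x) / G x = 0"
    using eventually_le_at_bot[of "ln c - 1"]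
    by eventually_elim (simp add: h_s_neg_iff[OF strike_pos] less_imp_le)
  then have "((\<lambda>x. max 0 (h_s c x) / G x) \<longlongrightarrow> 0) at_bot"
    by (rule tendsto_eventually)
  then show ?thesis
    by (simp add: H_def tendsto_Lim)
qed

lemma continuous_on_H: "continuous_on {0..} H"
proof (clarsimp simp: continuous_on_eq_continuous_within)
  fix z :: real
  assume "0 \<le> z"
  show "continuous (at z within {0..}) H"
  proof (cases "z = 0")
    case False
    then show ?thesis
      using \<open>0 \<le> z\<close> H_has_real_derivative[of z]
      by (auto intro: continuous_at_imp_continuous_within DERIV_isCont)
  next
    case True
    have "((\<lambda>x. (exp x - c) * inverse (G x)) \<longlongrightarrow> (0 - c) * 0) at_bot"
      by (intro tendsto_mult tendsto_diff exp_at_bot tendsto_const tendsto_inverse_0_at_top G_at_bot)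
    then have "((\<lambda>x. h_s c x / G x) \<longlongrightarrow> 0) at_bot"
      by (simp add: h_s_def divide_inverse)
    from filterlim_compose[OF this phi_at_right_0]
    have "(H \<longlongrightarrow> 0) (at 0 within {0..})"
      by (rule tendsto_cong[THEN iffD1, rotated])
         (auto simp: eventually_at_filter H_pos_arg)
    then show ?thesis
      using True by (simp add: continuous_within H_zero)
  qed
qed

lemma H_neg: "0 < z \<Longrightarrow> z < psi (ln c) \<Longrightarrow> H z < 0"
  using G_pos[of "phi z"] by (simp add: H_pos_arg h_s_neg_iff[OF strike_pos] phi_less_iff divide_neg_pos)

lemma h_s_pos_above_psi: "psi (ln c) < z \<Longrightarrow> z > 0 \<and> h_s c (phi z) > 0"
  using psi_pos[of "ln c"] less_phi_iff[of z "ln c"] by (auto simp: h_s_pos_iff[OF strike_pos])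

lemma H_pos: "psi (ln c) < z \<Longrightarrow> H z > 0"
  using h_s_pos_above_psi G_pos by (simp add: H_pos_arg)

lemma dH_pos: "h_s c x \<ge> 0 \<Longrightarrow> dH x > 0"
proof -
  assume "h_s c x \<ge> 0"
  then have "h_s c x * G1 x \<le> 0"
    using G1_neg[of x] by (simp add: mult_nonneg_nonpos)
  moreover have "exp x * G x > 0"
    using G_pos[of x] by simp
  ultimately show ?thesis
    using wronskian_pos[of x] by (simp add: dH_def)
qed

lemma strict_mono_on_H: "strict_mono_on {psi (ln c)<..} H"
proof (rule strict_mono_onI)
  fix s t
  assume s: "s \<in> {psi (ln c)<..}" and "s < t"
  have "\<exists>d. (H has_real_derivative d) (at u) \<and> d > 0" if "s \<le> u" for u
  proof -
    have "u > 0 \<and> h_s c (phi u) > 0"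
      using s that by (intro h_s_pos_above_psi) simp
    then show ?thesis
      using H_has_real_derivative[of u] dH_pos[of "phi u"] less_imp_le by blast
  qed
  then show "H s < H t"
    using DERIV_pos_imp_increasing[OF \<open>s < t\<close>] by blast
qed

text \<open>Both terms of \<open>dH\<close> are bounded via \<open>W \<ge> F1 G\<close> and \<open>W \<ge> - F G1\<close>.\<close>
lemma dH_le: "h_s c x \<ge> 0 \<Longrightarrow> dH x \<le> exp x / F1 x + exp x / F x"
proof -
  assume "h_s c x \<ge> 0"
  have "F1 x * G x > 0" "F x * (- G1 x) > 0"
    using F_pos[of x] G_pos[of x] F1_pos[of x] G1_neg[of x] by (simp_all add: mult_pos_neg)
  moreover have "F1 x * G x \<le> wronskian x" "F x * (- G1 x) \<le> wronskian x"
    using calculation by (simp_all add: wronskian_def)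
  ultimately have W: "0 < wronskian x * (F1 x * G x)" "0 < wronskian x * (F x * (- G1 x))"
    "F1 x * G x \<le> wronskian x" "F x * (- G1 x) \<le> wronskian x"
    using wronskian_pos[of x] by (simp_all add: mult_pos_neg)
  have "dH x = exp x * G x / wronskian x + h_s c x * (- G1 x) / wronskian x"
    by (simp add: dH_def diff_divide_distrib)
  moreover have "exp x * G x / wronskian x \<le> exp x / F1 x"
  proof -
    have "exp x * G x / wronskian x \<le> exp x * G x / (F1 x * G x)"
      using W G_pos[of x] by (intro divide_left_mono) auto
    then show ?thesis
      using G_pos[of x] by simp
  qed
  moreover have "h_s c x * (- G1 x) / wronskian x \<le> exp x / F x"
  proof -
    have "exp x * G1 x < 0"
      using G1_neg[of x] by (simp add: mult_pos_neg)
    have "h_s c x * (- G1 x) / wronskian x \<le> exp x * (- G1 x) / wronskian x"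
      using G1_neg[of x] strike_pos wronskian_pos[of x]
      by (intro divide_right_mono mult_right_mono) (auto simp: h_s_def)
    also have "\<dots> \<le> exp x * (- G1 x) / (F x * (- G1 x))"
      using W \<open>exp x * G1 x < 0\<close> by (intro divide_left_mono) auto
    also have "\<dots> = exp x / F x"
      using G1_neg[of x] by simp
    finally show ?thesis .
  qed
  ultimately show ?thesis
    by linarith
qed

lemma dH_at_top: "(dH \<longlongrightarrow> 0) at_top"
proof (rule tendsto_sandwich)
  have ev: "\<forall>\<^sub>F x in at_top. h_s c x \<ge> 0"
    using eventually_gt_at_top[of "ln c"]
    by eventually_elim (simp add: h_s_pos_iff[OF strike_pos] less_imp_le)
  then show "\<forall>\<^sub>F x in at_top. 0 \<le> dH x"
    by eventually_elim (simp add: dH_pos less_imp_le)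
  from ev show "\<forall>\<^sub>F x in at_top. dH x \<le> exp x / F1 x + exp x / F x"
    by eventually_elim (rule dH_le)
  show "((\<lambda>x. exp x / F1 x + exp x / F x) \<longlongrightarrow> 0) at_top"
    using tendsto_add[OF exp_div_F1 exp_div_F] by simp
qed simp

lemma deriv_H_at_top: "(deriv H \<longlongrightarrow> 0) at_top"
  using filterlim_compose[OF dH_at_top phi_at_top]
  by (rule tendsto_cong[THEN iffD1, rotated])
     (use eventually_gt_at_top[of 0] in \<open>eventually_elim, simp add: deriv_H\<close>)

lemma d2H_sign: "z > 0 \<Longrightarrow> sgn (d2H z) = sgn (Lh (phi z))"
  using G_pos[of "phi z"] wronskian_pos[of "phi z"] by (simp add: d2H_def sgn_mult)

lemma convex_on_H:
  assumes "\<And>x. x \<le> x0 \<Longrightarrow> Lh x \<ge> 0"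
  shows "convex_on {0<..psi x0} H"
proof (rule f''_ge0_imp_convex[where f' = "\<lambda>z. dH (phi z)" and f'' = d2H])
  fix z
  assume z: "z \<in> {0<..psi x0}"
  then show "(H has_real_derivative dH (phi z)) (at z)"
    "((\<lambda>z. dH (phi z)) has_real_derivative d2H z) (at z)"
    by (auto intro: H_has_real_derivative dH_phi_has_real_derivative)
  have "Lh (phi z) \<ge> 0"
    using z psi_phi[of z] psi_le_iff[of "phi z" x0] assms by auto
  then show "0 \<le> d2H z"
    using d2H_sign[of z] z by (auto simp: sgn_if split: if_splits)
qed simp

lemma concave_on_H:
  assumes "\<And>x. x \<ge> x0 \<Longrightarrow> Lh x \<le> 0"
  shows "concave_on {psi x0..} H"
proof (rule f''_le0_imp_concave[where f' = "\<lambda>z. dH (phi z)" and f'' = d2H])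
  fix z
  assume "z \<in> {psi x0..}"
  then have z: "z > 0" "psi x0 \<le> z"
    using psi_pos[of x0] by auto
  then show "(H has_real_derivative dH (phi z)) (at z)"
    "((\<lambda>z. dH (phi z)) has_real_derivative d2H z) (at z)"
    by (auto intro: H_has_real_derivative dH_phi_has_real_derivative)
  have "Lh (phi z) \<le> 0"
    using z psi_phi[of z] psi_le_iff[of x0 "phi z"] assms by auto
  then show "d2H z \<le> 0"
    using d2H_sign[of z] z by (auto simp: sgn_if split: if_splits)
qed simp

end

section \<open>The OU functions F and G\<close>

lemma gauss_moment_affine_dominates_exp:
  assumes a: "a > -1" and k: "k > 0"
  shows "((\<lambda>x. exp x / gauss_moment a (k * (x - \<theta>))) \<longlongrightarrow> 0) at_top"
proof -
  have "((\<lambda>y. exp ((1 / k) * y) / gauss_moment a y) \<longlongrightarrow> 0) at_top"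
    using a k by (intro gauss_moment_dominates_exp) auto
  moreover have "filterlim (\<lambda>x. k * (x - \<theta>)) at_top at_top"
    using k by real_asymp
  ultimately have "((\<lambda>x. exp \<theta> * (exp ((1 / k) * (k * (x - \<theta>))) / gauss_moment a (k * (x - \<theta>))))
      \<longlongrightarrow> 0) at_top"
    by (rule tendsto_mult_right_zero[OF filterlim_compose])
  then show ?thesis
    using k by (simp add: exp_add[symmetric])
qed

lemma ou_solution_pair_gauss_moments:
  fixes a k \<theta> c :: real
  assumes a: "a > -1" and k: "k > 0" and c: "c > 0"
  shows "ou_solution_pair
    (\<lambda>x. gauss_moment a (k * (x - \<theta>))) (\<lambda>x. k * gauss_moment (a + 1) (k * (x - \<theta>)))
    (\<lambda>x. k\<^sup>2 * gauss_moment (a + 2) (k * (x - \<theta>)))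
    (\<lambda>x. gauss_moment a (k * (\<theta> - x))) (\<lambda>x. - k * gauss_moment (a + 1) (k * (\<theta> - x)))
    (\<lambda>x. k\<^sup>2 * gauss_moment (a + 2) (k * (\<theta> - x)))
    (k\<^sup>2) \<theta> (k\<^sup>2 * (a + 1)) c"
proof -
  have d0: "(gauss_moment a has_real_derivative gauss_moment (a + 1) y) (at y)" for y
    using gauss_moment_has_real_derivative[OF a] .
  have d1: "(gauss_moment (a + 1) has_real_derivative gauss_moment (a + 2) y) (at y)" for y
    using gauss_moment_has_real_derivative[of "a + 1"] a by (simp add: add.assoc)
  have pos: "gauss_moment b y > 0" if "b \<ge> a" for b y
    using gauss_moment_pos[of b y] a that by simp
  show ?thesis
  proof
    fix x :: real
    have inner: "((\<lambda>x. k * (x - \<theta>)) has_real_derivative k) (at x)"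
      "((\<lambda>x. k * (\<theta> - x)) has_real_derivative - k) (at x)"
      by (auto intro!: derivative_eq_intros)
    show "((\<lambda>x. gauss_moment a (k * (x - \<theta>))) has_real_derivative k * gauss_moment (a + 1) (k * (x - \<theta>))) (at x)"
      using DERIV_chain2[OF d0 inner(1)] by (simp add: mult.commute)
    show "((\<lambda>x. k * gauss_moment (a + 1) (k * (x - \<theta>))) has_real_derivative k\<^sup>2 * gauss_moment (a + 2) (k * (x - \<theta>))) (at x)"
      using DERIV_cmult[OF DERIV_chain2[OF d1 inner(1)], of k] by (simp add: power2_eq_square mult_ac)
    show "((\<lambda>x. gauss_moment a (k * (\<theta> - x))) has_real_derivative - k * gauss_moment (a + 1) (k * (\<theta> - x))) (at x)"
      using DERIV_chain2[OF d0 inner(2)] by (simp add: mult.commute)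
    show "((\<lambda>x. - k * gauss_moment (a + 1) (k * (\<theta> - x))) has_real_derivative k\<^sup>2 * gauss_moment (a + 2) (k * (\<theta> - x))) (at x)"
      using DERIV_cmult[OF DERIV_chain2[OF d1 inner(2)], of "- k"] by (simp add: power2_eq_square mult_ac)
    show "gauss_moment a (k * (x - \<theta>)) > 0" "gauss_moment a (k * (\<theta> - x)) > 0"
      "k * gauss_moment (a + 1) (k * (x - \<theta>)) > 0" "- k * gauss_moment (a + 1) (k * (\<theta> - x)) < 0"
      using k pos by (auto simp: mult_pos_pos)
    show "k\<^sup>2 * gauss_moment (a + 2) (k * (x - \<theta>))
        = k\<^sup>2 * (x - \<theta>) * (k * gauss_moment (a + 1) (k * (x - \<theta>))) + k\<^sup>2 * (a + 1) * gauss_moment a (k * (x - \<theta>))"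
      "k\<^sup>2 * gauss_moment (a + 2) (k * (\<theta> - x))
        = k\<^sup>2 * (x - \<theta>) * (- k * gauss_moment (a + 1) (k * (\<theta> - x))) + k\<^sup>2 * (a + 1) * gauss_moment a (k * (\<theta> - x))"
      unfolding gauss_moment_recurrence[OF a] by (simp_all add: algebra_simps power2_eq_square)
  next
    show "c > 0"
      by (rule c)
    show "((\<lambda>x. exp x / gauss_moment a (k * (x - \<theta>))) \<longlongrightarrow> 0) at_top"
      using a k by (rule gauss_moment_affine_dominates_exp)
    show "((\<lambda>x. exp x / (k * gauss_moment (a + 1) (k * (x - \<theta>)))) \<longlongrightarrow> 0) at_top"
      using tendsto_mult_right_zero[OF gauss_moment_affine_dominates_exp[of "a + 1" k \<theta>], of "1 / k"] a k
      by simp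
    have "filterlim (\<lambda>x. k * (\<theta> - x)) at_top at_bot"
      using k by real_asymp
    then show "filterlim (\<lambda>x. gauss_moment a (k * (\<theta> - x))) at_top at_bot"
      by (rule filterlim_compose[OF gauss_moment_at_top[OF a]])
  qed
qed

lemma f_s_strict_antimono:
  assumes "mu > 0" "r > 0" "c > 0" "x < y"
  shows "f_s mu sig theta r c y < f_s mu sig theta r c x"
  using assms by (simp add: f_s_def add_strict_mono)

lemma f_s_x_s:
  assumes mu: "mu > 0" and r: "r > 0" and c: "c > 0"
  shows "f_s mu sig theta r c (x_s mu sig theta r c) = 0"
proof -
  define A where "A = mu * theta + sig\<^sup>2 / 2 - r"
  define x1 where "x1 = min 0 (A / mu - 1)"
  define x2 where "x2 = max 0 ((A + r * c) / mu + 1)"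
  have "mu * x1 \<le> A - mu"
    using mu by (simp add: x1_def min_def field_simps)
  then have "f_s mu sig theta r c x1 \<ge> 0"
    using r c mu by (simp add: f_s_def A_def add_nonneg_pos less_imp_le)
  moreover have "f_s mu sig theta r c x2 \<le> 0"
  proof -
    have "A + r * c + mu \<le> mu * x2"
      using mu by (simp add: x2_def max_def field_simps)
    moreover have "r * c * exp (- x2) \<le> r * c"
      using r c by (simp add: x2_def)
    ultimately show ?thesis
      using mu by (simp add: f_s_def A_def)
  qed
  moreover have "x1 \<le> x2"
    by (simp add: x1_def x2_def)
  moreover have "\<And>x. isCont (f_s mu sig theta r c) x"
    unfolding f_s_def[abs_def] by (intro continuous_intros)
  ultimately obtain x where x: "f_s mu sig theta r c x = 0"
    using IVT2[of "f_s mu sig theta r c" x2 0 x1] by blast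
  have "(THE x. f_s mu sig theta r c x = 0) = x"
  proof (rule the_equality)
    fix y
    assume "f_s mu sig theta r c y = 0"
    then show "y = x"
      using x f_s_strict_antimono[OF mu r c, where sig = sig and theta = theta and x = x and y = y]
        f_s_strict_antimono[OF mu r c, where sig = sig and theta = theta and x = y and y = x]
      by (cases x y rule: linorder_cases) auto
  qed (rule x)
  then show ?thesis
    using x by (simp add: x_s_def)
qed

lemma f_s_nonneg_iff:
  assumes "mu > 0" "r > 0" "c > 0"
  shows "0 \<le> f_s mu sig theta r c x \<longleftrightarrow> x \<le> x_s mu sig theta r c"
  using f_s_x_s[OF assms, where sig = sig and theta = theta]
    f_s_strict_antimono[OF assms, where sig = sig and theta = theta and x = x and y = "x_s mu sig theta r c"]
    f_s_strict_antimono[OF assms, where sig = sig and theta = theta and x = "x_s mu sig theta r c" and y = x]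
  by (cases x "x_s mu sig theta r c" rule: linorder_cases) auto

lemma f_s_nonpos_iff:
  assumes "mu > 0" "r > 0" "c > 0"
  shows "f_s mu sig theta r c x \<le> 0 \<longleftrightarrow> x_s mu sig theta r c \<le> x"
  using f_s_x_s[OF assms, where sig = sig and theta = theta]
    f_s_strict_antimono[OF assms, where sig = sig and theta = theta and x = x and y = "x_s mu sig theta r c"]
    f_s_strict_antimono[OF assms, where sig = sig and theta = theta and x = "x_s mu sig theta r c" and y = x]
  by (cases x "x_s mu sig theta r c" rule: linorder_cases) auto

theorem lemma4p2:
  fixes mu sig theta r c :: real
  assumes "mu > 0" "sig > 0" "r > 0" "c > 0"
  defines "H \<equiv> OU_H mu sig theta r c"
      and "z0 \<equiv> OU_psi mu sig theta r (ln c)"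
      and "zs \<equiv> OU_psi mu sig theta r (x_s mu sig theta r c)"
  shows "continuous_on {0..} H
    \<and> (\<forall>z>0. H differentiable (at z) \<and> deriv H differentiable (at z))
    \<and> H 0 = 0
    \<and> (\<forall>z. 0 < z \<and> z < z0 \<longrightarrow> H z < 0)
    \<and> (\<forall>z. z0 < z \<longrightarrow> H z > 0)
    \<and> strict_mono_on {z0<..} H
    \<and> (deriv H \<longlongrightarrow> 0) at_top
    \<and> convex_on {0<..zs} H
    \<and> concave_on {zs..} H"
proof -
  define a where "a = r / mu - 1"
  define k where "k = sqrt (2 * mu / sig\<^sup>2)"
  have "a > -1" "k > 0"
    using assms by (simp_all add: a_def k_def)
  interpret ou: ou_solution_pair
    "\<lambda>x. gauss_moment a (k * (x - theta))" "\<lambda>x. k * gauss_moment (a + 1) (k * (x - theta))"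
    "\<lambda>x. k\<^sup>2 * gauss_moment (a + 2) (k * (x - theta))"
    "\<lambda>x. gauss_moment a (k * (theta - x))" "\<lambda>x. - k * gauss_moment (a + 1) (k * (theta - x))"
    "\<lambda>x. k\<^sup>2 * gauss_moment (a + 2) (k * (theta - x))"
    "k\<^sup>2" theta "k\<^sup>2 * (a + 1)" c
    using ou_solution_pair_gauss_moments \<open>a > -1\<close> \<open>k > 0\<close> \<open>c > 0\<close> .
  have psi_eq: "OU_psi mu sig theta r = ou.psi"
    by (intro ext) (unfold ou.psi_def, simp add: OU_psi_def OU_F_def OU_G_def gauss_moment_def a_def k_def)
  have H_eq: "H = ou.H"
    by (intro ext) (unfold H_def OU_H_def ou.H_def ou.phi_def psi_eq, simp add: OU_G_def gauss_moment_def a_def k_def)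
  have Lh_eq: "ou.Lh x = 2 / sig\<^sup>2 * exp x * f_s mu sig theta r c x" for x
    unfolding ou.Lh_def using assms by (simp add: h_s_def f_s_def a_def k_def field_simps exp_minus)
  have "ou.Lh x \<ge> 0" if "x \<le> x_s mu sig theta r c" for x
    using that f_s_nonneg_iff[OF assms(1,3,4)] by (simp add: Lh_eq zero_le_mult_iff)
  moreover have "ou.Lh x \<le> 0" if "x \<ge> x_s mu sig theta r c" for x
    using that f_s_nonpos_iff[OF assms(1,3,4)] by (simp add: Lh_eq divide_le_0_iff mult_le_0_iff)
  ultimately show ?thesis
    unfolding z0_def zs_def psi_eq H_eq
    using ou.continuous_on_H ou.H_twice_differentiable ou.H_zero ou.H_neg ou.H_pos
      ou.strict_mono_on_H ou.deriv_H_at_top ou.convex_on_H ou.concave_on_H by blast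
qed

end
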